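(* Let $\nu$ be a lattice path from $(0,0)$ to $(\ell-n,n)$ with $n\ge 1$, let $f_0$ be the largest index with $b_{f_0}(\nu)=0$, let $\nu^{\#}$ be the path obtained from $\nu$ by deleting its first $f_0+1$ steps (translated to start at the origin), and for $\vec{\mathsf b}=(\mathsf b_0,\dots,\mathsf b_\ell)\in\mathrm{Vec}(\nu)$ let $\vec{\mathsf b}^{\#}=(\mathsf b_{f_0+1}-1,\mathsf b_{f_0+2}-1,\dots,\mathsf b_\ell-1)$, which lies in $\mathrm{Vec}(\nu^{\#})$. If $\vec{\mathsf b}$ is $t$-$\mathsf{Pop}$-sortable in $\mathrm{Vec}(\nu)$, then $\vec{\mathsf b}^{\#}$ is $t$-$\mathsf{Pop}$-sortable in $\mathrm{Vec}(\nu^{\#})$.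
   Context: Lattice paths use unit steps N$=(0,1)$, E$=(1,0)$. For a path $\nu$ with $\ell$ steps from $(0,0)$ to $(\ell-n,n)$, $\mathbf b(\nu)=(b_0(\nu),\dots,b_\ell(\nu))$ lists the heights ($y$-coordinates) of the successive lattice points of $\nu$, and $f_k$ ($0\le k\le n$) is the largest index with $b_{f_k}(\nu)=k$. $\mathrm{Vec}(\nu)$ is the set of integer vectors $(\mathsf b_0,\dots,\mathsf b_\ell)$ such that (1) $\mathsf b_{f_k}=k$ for all $k=0,\dots,n$; (2) $b_i(\nu)\le\mathsf b_i\le n$ for all $i$; (3) if $\mathsf b_i=k$ then $\mathsf b_j\le k$ for all $i+1\le j\le f_k$. With the componentwise order, $\mathrm{Vec}(\nu)$ is a finite lattice (isomorphic to the $\nu$-Tamari lattice $\mathrm{Tam}(\nu)$) with minimum $\hat 0$. For a finite lattice $M$, $\mathsf{Pop}_M(x)=\bigwedge(\{y: y\lessdot x\}\cup\{x\})$, and $x$ is $t$-$\mathsf{Pop}$-sortable if $\mathsf{Pop}_M^t(x)=\hat 0$. *)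

theory Defs
  imports Main
begin

text \<open>A lattice path is a list of steps: True = north step N, False = east step E.
  A path with l steps and n north steps goes from (0,0) to (l-n,n).\<close>

definition nsteps :: "bool list \<Rightarrow> nat" where
  "nsteps \<nu> = length (filter id \<nu>)"

definition height :: "bool list \<Rightarrow> nat \<Rightarrow> nat" where
  "height \<nu> i = length (filter id (take i \<nu>))"

definition fidx :: "bool list \<Rightarrow> nat \<Rightarrow> nat" where
  "fidx \<nu> k = (GREATEST i. i \<le> length \<nu> \<and> height \<nu> i = k)"

definition Vec :: "bool list \<Rightarrow> int list set" where
  "Vec \<nu> = {bb. length bb = length \<nu> + 1
      \<and> (\<forall>k\<le>nsteps \<nu>. bb ! fidx \<nu> k = int k)
      \<and> (\<forall>i\<le>length \<nu>. int (height \<nu> i) \<le> bb ! i \<and> bb ! i \<le> int (nsteps \<nu>))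
      \<and> (\<forall>i\<le>length \<nu>. \<forall>k\<le>nsteps \<nu>. bb ! i = int k \<longrightarrow>
             (\<forall>j. i + 1 \<le> j \<and> j \<le> fidx \<nu> k \<longrightarrow> bb ! j \<le> int k))}"

definition vle :: "int list \<Rightarrow> int list \<Rightarrow> bool" where
  "vle xs ys \<longleftrightarrow> length xs = length ys \<and> (\<forall>i<length xs. xs ! i \<le> ys ! i)"

definition vlt :: "int list \<Rightarrow> int list \<Rightarrow> bool" where
  "vlt xs ys \<longleftrightarrow> vle xs ys \<and> xs \<noteq> ys"

definition covby :: "int list set \<Rightarrow> int list \<Rightarrow> int list \<Rightarrow> bool" where
  "covby S y x \<longleftrightarrow> y \<in> S \<and> x \<in> S \<and> vlt y x \<and> \<not> (\<exists>z\<in>S. vlt y z \<and> vlt z x)"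

definition meet :: "int list set \<Rightarrow> int list set \<Rightarrow> int list" where
  "meet S A = (THE m. m \<in> S \<and> (\<forall>a\<in>A. vle m a) \<and>
                  (\<forall>z\<in>S. (\<forall>a\<in>A. vle z a) \<longrightarrow> vle z m))"

definition bottom :: "int list set \<Rightarrow> int list" where
  "bottom S = (THE m. m \<in> S \<and> (\<forall>z\<in>S. vle m z))"

definition Pop :: "int list set \<Rightarrow> int list \<Rightarrow> int list" where
  "Pop S x = meet S ({y. covby S y x} \<union> {x})"

definition pop_sortable :: "int list set \<Rightarrow> nat \<Rightarrow> int list \<Rightarrow> bool" where
  "pop_sortable S t x \<longleftrightarrow> (Pop S ^^ t) x = bottom S"

definition path_sharp :: "bool list \<Rightarrow> bool list" where
  "path_sharp \<nu> = drop (fidx \<nu> 0 + 1) \<nu>"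

definition vec_sharp :: "bool list \<Rightarrow> int list \<Rightarrow> int list" where
  "vec_sharp \<nu> bb = map (\<lambda>x. x - 1) (drop (fidx \<nu> 0 + 1) bb)"

end

theory Submission imports Defs begin

text \<open>Let \<open>f\<^sub>0\<close> be the last index at height 0, so that step \<open>f\<^sub>0\<close> of \<open>\<nu>\<close> is its first north
  step, and write \<open>x\<^sup>#\<close> for \<open>vec_sharp \<nu> x\<close>. Every entry of a vector in \<open>Vec \<nu>\<close> after index
  \<open>f\<^sub>0\<close> is at least 1, and the constraints of \<open>Vec \<nu>\<close> on those entries are exactly the
  constraints of \<open>Vec \<nu>\<^sup>#\<close> shifted by one. Hence, for \<open>x \<in> Vec \<nu>\<close>, grafting vectors
  \<open>z \<le> x\<^sup>#\<close> of \<open>Vec \<nu>\<^sup>#\<close> (shifted up by one) onto the first \<open>f\<^sub>0 + 1\<close> entries of \<open>x\<close>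
  identifies the interval below \<open>x\<^sup>#\<close> with the elements below \<open>x\<close> that agree with \<open>x\<close> up to
  \<open>f\<^sub>0\<close>. A cover \<open>y\<close> of \<open>x\<close> either satisfies \<open>y\<^sup># = x\<^sup>#\<close> or lies in this image, so \<open>#\<close>
  maps \<open>{x} \<union> {covers of x}\<close> onto \<open>{x\<^sup>#} \<union> {covers of x\<^sup>#}\<close>. Meets in \<open>Vec\<close> are
  componentwise minima, which commute with \<open>#\<close>; so \<open>#\<close> intertwines the two \<open>Pop\<close> maps,
  and it sends the minimum of \<open>Vec \<nu>\<close> (the height vector of \<open>\<nu>\<close>) to that of \<open>Vec \<nu>\<^sup>#\<close>.\<close>

lemma height_0 [simp]: "height \<nu> 0 = 0"
  by (simp add: height_def)

lemma height_add: "height \<nu> (i + j) = height \<nu> i + height (drop i \<nu>) j"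
  by (simp add: height_def take_add)

lemma height_mono: "i \<le> j \<Longrightarrow> height \<nu> i \<le> height \<nu> j"
  using height_add[of \<nu> i "j - i"] by simp

lemma height_length: "height \<nu> (length \<nu>) = nsteps \<nu>"
  by (simp add: height_def nsteps_def)

lemma height_le_nsteps: "height \<nu> i \<le> nsteps \<nu>"
  by (metis height_def height_length height_mono nat_le_linear take_all)

lemma ex_height_eq: "k \<le> nsteps \<nu> \<Longrightarrow> \<exists>i \<le> length \<nu>. height \<nu> i = k"
proof (induction \<nu> arbitrary: k)
  case Nil
  then show ?case by (simp add: nsteps_def)
next
  case (Cons a \<nu>)
  have height_Cons: "height (a # \<nu>) (Suc i) = (if a then 1 else 0) + height \<nu> i" for i
    by (simp add: height_def)
  show ?case
  proof (cases "k = 0")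
    case False
    with Cons.prems have "k - (if a then 1 else 0) \<le> nsteps \<nu>"
      by (auto simp: nsteps_def split: if_splits)
    then obtain i where "i \<le> length \<nu>" "height \<nu> i = k - (if a then 1 else 0)"
      using Cons.IH by blast
    with False show ?thesis
      by (intro exI[of _ "Suc i"]) (auto simp: height_Cons)
  qed (intro exI[of _ 0], simp)
qed

lemma
  assumes "k \<le> nsteps \<nu>"
  shows fidx_le_length: "fidx \<nu> k \<le> length \<nu>"
    and height_fidx: "height \<nu> (fidx \<nu> k) = k"
    and le_fidx: "i \<le> length \<nu> \<Longrightarrow> height \<nu> i = k \<Longrightarrow> i \<le> fidx \<nu> k"
proof -
  obtain i0 where i0: "i0 \<le> length \<nu>" "height \<nu> i0 = k"
    using ex_height_eq[OF assms] by blast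
  have "fidx \<nu> k \<le> length \<nu> \<and> height \<nu> (fidx \<nu> k) = k"
    unfolding fidx_def by (rule GreatestI_nat[where k = i0 and b = "length \<nu>"]) (use i0 in auto)
  then show "fidx \<nu> k \<le> length \<nu>" "height \<nu> (fidx \<nu> k) = k"
    by auto
  show "i \<le> length \<nu> \<Longrightarrow> height \<nu> i = k \<Longrightarrow> i \<le> fidx \<nu> k"
    unfolding fidx_def by (rule Greatest_le_nat[where b = "length \<nu>"]) auto
qed

lemma VecI:
  assumes "length bb = length \<nu> + 1"
    and "\<And>k. k \<le> nsteps \<nu> \<Longrightarrow> bb ! fidx \<nu> k = int k"
    and "\<And>i. i \<le> length \<nu> \<Longrightarrow> int (height \<nu> i) \<le> bb ! i"
    and "\<And>i. i \<le> length \<nu> \<Longrightarrow> bb ! i \<le> int (nsteps \<nu>)"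
    and "\<And>i k j. i \<le> length \<nu> \<Longrightarrow> k \<le> nsteps \<nu> \<Longrightarrow> bb ! i = int k \<Longrightarrow>
           i + 1 \<le> j \<Longrightarrow> j \<le> fidx \<nu> k \<Longrightarrow> bb ! j \<le> int k"
  shows "bb \<in> Vec \<nu>"
  using assms unfolding Vec_def by blast

lemma
  assumes "bb \<in> Vec \<nu>"
  shows length_Vec: "length bb = length \<nu> + 1"
    and Vec_nth_fidx: "k \<le> nsteps \<nu> \<Longrightarrow> bb ! fidx \<nu> k = int k"
    and Vec_nth_ge_height: "i \<le> length \<nu> \<Longrightarrow> int (height \<nu> i) \<le> bb ! i"
    and Vec_nth_le_nsteps: "i \<le> length \<nu> \<Longrightarrow> bb ! i \<le> int (nsteps \<nu>)"
    and Vec_nth_le_until_fidx: "i \<le> length \<nu> \<Longrightarrow> k \<le> nsteps \<nu> \<Longrightarrow> bb ! i = int k \<Longrightarrow>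
           i + 1 \<le> j \<Longrightarrow> j \<le> fidx \<nu> k \<Longrightarrow> bb ! j \<le> int k"
  using assms unfolding Vec_def by auto

lemma finite_Vec: "finite (Vec \<nu>)"
proof (rule finite_subset)
  show "Vec \<nu> \<subseteq> {xs. set xs \<subseteq> {0..int (nsteps \<nu>)} \<and> length xs = length \<nu> + 1}"
  proof (safe intro!: length_Vec)
    fix bb v assume bb: "bb \<in> Vec \<nu>" and "v \<in> set bb"
    then obtain i where "i \<le> length \<nu>" "v = bb ! i"
      by (metis in_set_conv_nth length_Vec less_Suc_eq_le Suc_eq_plus1)
    then show "v \<in> {0..int (nsteps \<nu>)}"
      using Vec_nth_ge_height[OF bb] Vec_nth_le_nsteps[OF bb] by force
  qed
  show "finite {xs. set xs \<subseteq> {0..int (nsteps \<nu>)} \<and> length xs = length \<nu> + 1}"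
    by (rule finite_lists_length_eq) simp
qed

lemma vle_refl [simp]: "vle x x"
  by (simp add: vle_def)

lemma vle_antisym: "vle x y \<Longrightarrow> vle y x \<Longrightarrow> x = y"
  unfolding vle_def by (metis nth_equalityI order.antisym)

lemma meet_eqI:
  assumes "m \<in> S" "\<And>a. a \<in> A \<Longrightarrow> vle m a"
    and "\<And>z. z \<in> S \<Longrightarrow> (\<And>a. a \<in> A \<Longrightarrow> vle z a) \<Longrightarrow> vle z m"
  shows "meet S A = m"
  unfolding meet_def by (rule the_equality) (use assms vle_antisym in blast)+

lemma bottom_eqI:
  assumes "m \<in> S" "\<And>z. z \<in> S \<Longrightarrow> vle m z"
  shows "bottom S = m"
  unfolding bottom_def by (rule the_equality) (use assms vle_antisym in blast)+

definition vmin :: "nat \<Rightarrow> int list set \<Rightarrow> int list" where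
  "vmin N A = map (\<lambda>i. Min ((\<lambda>a. a ! i) ` A)) [0..<N]"

lemma length_vmin [simp]: "length (vmin N A) = N"
  by (simp add: vmin_def)

lemma nth_vmin: "i < N \<Longrightarrow> vmin N A ! i = Min ((\<lambda>a. a ! i) ` A)"
  by (simp add: vmin_def del: upt_Suc)

lemma
  assumes "A \<subseteq> Vec \<nu>" "A \<noteq> {}"
  shows vmin_in_Vec: "vmin (length \<nu> + 1) A \<in> Vec \<nu>"
    and meet_Vec: "meet (Vec \<nu>) A = vmin (length \<nu> + 1) A"
proof -
  let ?m = "vmin (length \<nu> + 1) A"
  have fin: "finite ((\<lambda>a. a ! i) ` A)" for i
    using finite_subset[OF assms(1) finite_Vec] by simp
  have m_le: "?m ! i \<le> a ! i" if "a \<in> A" "i \<le> length \<nu>" for a i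
    using that fin by (simp add: nth_vmin)
  have m_attained: "\<exists>a\<in>A. ?m ! i = a ! i" if "i \<le> length \<nu>" for i
  proof -
    have "Min ((\<lambda>a. a ! i) ` A) \<in> (\<lambda>a. a ! i) ` A"
      using Min_in[OF fin] assms(2) by simp
    then show ?thesis
      using that by (auto simp: nth_vmin)
  qed
  have m_ge: "c \<le> ?m ! i" if "i \<le> length \<nu>" "\<And>a. a \<in> A \<Longrightarrow> c \<le> a ! i" for c i
    using that fin assms(2) by (simp add: nth_vmin)
  have A_Vec: "a \<in> Vec \<nu>" if "a \<in> A" for a
    using that assms(1) by blast
  show mV: "?m \<in> Vec \<nu>"
  proof (rule VecI)
    fix k assume k: "k \<le> nsteps \<nu>"
    then have "(\<lambda>a. a ! fidx \<nu> k) ` A = {int k}"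
      using Vec_nth_fidx[OF A_Vec k] assms(2) by force
    then show "?m ! fidx \<nu> k = int k"
      using fidx_le_length[OF k] by (simp add: nth_vmin)
  next
    fix i assume i: "i \<le> length \<nu>"
    show "int (height \<nu> i) \<le> ?m ! i"
      by (rule m_ge[OF i]) (rule Vec_nth_ge_height[OF A_Vec i])
    obtain a where "a \<in> A" "?m ! i = a ! i"
      using m_attained[OF i] by blast
    then show "?m ! i \<le> int (nsteps \<nu>)"
      using Vec_nth_le_nsteps[OF A_Vec i] by simp
  next
    fix i k j assume i: "i \<le> length \<nu>" and k: "k \<le> nsteps \<nu>" and mi: "?m ! i = int k"
      and j: "i + 1 \<le> j" "j \<le> fidx \<nu> k"
    obtain a where a: "a \<in> A" "?m ! i = a ! i"
      using m_attained[OF i] by blast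
    then have "a ! j \<le> int k"
      using Vec_nth_le_until_fidx[OF A_Vec[OF a(1)] i k _ j] mi by simp
    moreover have "j \<le> length \<nu>"
      using j fidx_le_length[OF k] by simp
    ultimately show "?m ! j \<le> int k"
      using m_le[OF a(1)] by fastforce
  qed simp
  show "meet (Vec \<nu>) A = ?m"
  proof (rule meet_eqI[OF mV])
    show "vle ?m a" if "a \<in> A" for a
      using m_le[OF that] length_Vec[OF A_Vec[OF that]] by (auto simp: vle_def)
    show "vle z ?m" if "z \<in> Vec \<nu>" "\<And>a. a \<in> A \<Longrightarrow> vle z a" for z
      unfolding vle_def
    proof (intro conjI allI impI)
      show "length z = length ?m"
        using length_Vec[OF that(1)] by simp
      fix i assume "i < length z"
      then show "z ! i \<le> ?m ! i"
        using that length_Vec[OF that(1)] by (intro m_ge) (auto simp: vle_def)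
    qed
  qed
qed

lemma Pop_in_Vec:
  assumes "x \<in> Vec \<nu>"
  shows "Pop (Vec \<nu>) x \<in> Vec \<nu>"
proof -
  have A: "{y. covby (Vec \<nu>) y x} \<union> {x} \<subseteq> Vec \<nu>" "{y. covby (Vec \<nu>) y x} \<union> {x} \<noteq> {}"
    using assms by (auto simp: covby_def)
  show ?thesis
    unfolding Pop_def meet_Vec[OF A] by (rule vmin_in_Vec[OF A])
qed

definition height_vec :: "bool list \<Rightarrow> int list" where
  "height_vec \<nu> = map (\<lambda>i. int (height \<nu> i)) [0..<length \<nu> + 1]"

lemma length_height_vec [simp]: "length (height_vec \<nu>) = length \<nu> + 1"
  by (simp add: height_vec_def)

lemma nth_height_vec: "i \<le> length \<nu> \<Longrightarrow> height_vec \<nu> ! i = int (height \<nu> i)"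
  by (simp add: height_vec_def del: upt_Suc)

lemma bottom_Vec: "bottom (Vec \<nu>) = height_vec \<nu>"
proof (rule bottom_eqI)
  show "height_vec \<nu> \<in> Vec \<nu>"
  proof (rule VecI)
    fix i k j assume k: "k \<le> nsteps \<nu>" and j: "j \<le> fidx \<nu> k"
    then have "j \<le> length \<nu>"
      using fidx_le_length[OF k] by simp
    then show "height_vec \<nu> ! j \<le> int k"
      using height_mono[OF j, of \<nu>] height_fidx[OF k] by (simp add: nth_height_vec)
  qed (simp_all add: nth_height_vec height_le_nsteps fidx_le_length height_fidx)
  show "vle (height_vec \<nu>) z" if "z \<in> Vec \<nu>" for z
    using that length_Vec[OF that] Vec_nth_ge_height[OF that]
    by (auto simp: vle_def nth_height_vec)
qed

locale nonflat_path =
  fixes \<nu> :: "bool list"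
  assumes has_north_step: "nsteps \<nu> \<ge> 1"
begin

abbreviation "f0 \<equiv> fidx \<nu> 0"
abbreviation "\<mu> \<equiv> drop (f0 + 1) \<nu>"

lemma height_f0: "height \<nu> f0 = 0"
  using height_fidx[of 0 \<nu>] by simp

lemma f0_less_length: "f0 < length \<nu>"
  using fidx_le_length[of 0 \<nu>] height_f0 height_length[of \<nu>] has_north_step
  by (cases "f0 = length \<nu>") auto

lemma height_upto_f0: "i \<le> f0 \<Longrightarrow> height \<nu> i = 0"
  using height_mono[of i f0 \<nu>] height_f0 by simp

lemma height_after_f0: "height \<nu> (f0 + 1 + m) = 1 + height \<mu> m"
proof -
  have "height \<nu> (f0 + 1) \<noteq> 0"
    using le_fidx[of 0 \<nu> "f0 + 1"] f0_less_length by auto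
  moreover have "height (drop f0 \<nu>) 1 \<le> 1"
    unfolding height_def by (rule order.trans[OF length_filter_le]) simp
  ultimately have "height \<nu> (f0 + 1) = 1"
    using height_add[of \<nu> f0 1] height_f0 by simp
  then show ?thesis
    using height_add[of \<nu> "f0 + 1" m] by simp
qed

lemma nsteps_sharp: "nsteps \<mu> = nsteps \<nu> - 1"
proof -
  have "length \<nu> = f0 + 1 + length \<mu>"
    using f0_less_length by simp
  then have "nsteps \<nu> = 1 + height \<mu> (length \<mu>)"
    using height_after_f0[of "length \<mu>"] height_length[of \<nu>] by metis
  then show ?thesis
    using height_length[of \<mu>] by simp
qed

lemma fidx_Suc: "k \<le> nsteps \<mu> \<Longrightarrow> fidx \<nu> (Suc k) = f0 + 1 + fidx \<mu> k"
proof (rule antisym)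
  assume k: "k \<le> nsteps \<mu>"
  then have Suc_k: "Suc k \<le> nsteps \<nu>"
    using nsteps_sharp has_north_step by simp
  show "f0 + 1 + fidx \<mu> k \<le> fidx \<nu> (Suc k)"
    using le_fidx[OF Suc_k] fidx_le_length[OF k] height_fidx[OF k] height_after_f0 f0_less_length
    by simp
  have "f0 < fidx \<nu> (Suc k)"
    using height_upto_f0[of "fidx \<nu> (Suc k)"] height_fidx[OF Suc_k]
    by (cases "fidx \<nu> (Suc k) \<le> f0") auto
  then obtain m where m: "fidx \<nu> (Suc k) = f0 + 1 + m"
    by (metis add_Suc less_imp_Suc_add Suc_eq_plus1)
  then have "m \<le> fidx \<mu> k"
    using le_fidx[OF k, of m] fidx_le_length[OF Suc_k] height_fidx[OF Suc_k] height_after_f0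
    by simp
  with m show "fidx \<nu> (Suc k) \<le> f0 + 1 + fidx \<mu> k"
    by simp
qed

lemma index_cases:
  assumes "i \<le> length \<nu>"
  obtains "i \<le> f0" | m where "i = f0 + 1 + m" "m \<le> length \<mu>"
proof (cases "i \<le> f0")
  case True
  then show ?thesis
    by (rule that(1))
next
  case False
  then show ?thesis
    using assms by (intro that(2)[of "i - f0 - 1"]) auto
qed

lemma length_vec_sharp: "length x = length \<nu> + 1 \<Longrightarrow> length (vec_sharp \<nu> x) = length \<mu> + 1"
  using f0_less_length by (simp add: vec_sharp_def)

lemma nth_vec_sharp:
  "length x = length \<nu> + 1 \<Longrightarrow> m \<le> length \<mu> \<Longrightarrow> vec_sharp \<nu> x ! m = x ! (f0 + 1 + m) - 1"
  using f0_less_length by (simp add: vec_sharp_def)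

lemma vec_sharp_in_Vec:
  assumes x: "x \<in> Vec \<nu>"
  shows "vec_sharp \<nu> x \<in> Vec \<mu>"
proof (rule VecI)
  show "length (vec_sharp \<nu> x) = length \<mu> + 1"
    by (rule length_vec_sharp[OF length_Vec[OF x]])
next
  fix k assume k: "k \<le> nsteps \<mu>"
  then show "vec_sharp \<nu> x ! fidx \<mu> k = int k"
    using nth_vec_sharp[OF length_Vec[OF x] fidx_le_length[OF k]] fidx_Suc[OF k]
      Vec_nth_fidx[OF x, of "Suc k"] nsteps_sharp has_north_step by simp
next
  fix i assume i: "i \<le> length \<mu>"
  then have ix: "f0 + 1 + i \<le> length \<nu>"
    using f0_less_length by simp
  show "int (height \<mu> i) \<le> vec_sharp \<nu> x ! i"
    using Vec_nth_ge_height[OF x ix] height_after_f0 nth_vec_sharp[OF length_Vec[OF x] i]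
    by simp
  show "vec_sharp \<nu> x ! i \<le> int (nsteps \<mu>)"
    using Vec_nth_le_nsteps[OF x ix] nth_vec_sharp[OF length_Vec[OF x] i] nsteps_sharp
      has_north_step by simp
next
  fix i k j assume i: "i \<le> length \<mu>" and k: "k \<le> nsteps \<mu>"
    and xi: "vec_sharp \<nu> x ! i = int k" and j: "i + 1 \<le> j" "j \<le> fidx \<mu> k"
  have ix: "f0 + 1 + i \<le> length \<nu>"
    using i f0_less_length by simp
  have "x ! (f0 + 1 + j) \<le> int (Suc k)"
    by (rule Vec_nth_le_until_fidx[OF x ix])
      (use k nsteps_sharp has_north_step xi nth_vec_sharp[OF length_Vec[OF x] i] j fidx_Suc[OF k]
        in auto)
  then show "vec_sharp \<nu> x ! j \<le> int k"
    using nth_vec_sharp[OF length_Vec[OF x]] j fidx_le_length[OF k] by simp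
qed

lemma vec_sharp_mono:
  assumes "length x = length \<nu> + 1" "length y = length \<nu> + 1" "vle x y"
  shows "vle (vec_sharp \<nu> x) (vec_sharp \<nu> y)"
  unfolding vle_def
proof (intro conjI allI impI)
  show "length (vec_sharp \<nu> x) = length (vec_sharp \<nu> y)"
    using length_vec_sharp assms by simp
  fix m assume "m < length (vec_sharp \<nu> x)"
  then have m: "m \<le> length \<mu>"
    using length_vec_sharp[OF assms(1)] by simp
  then have "x ! (f0 + 1 + m) \<le> y ! (f0 + 1 + m)"
    using assms f0_less_length unfolding vle_def by simp
  then show "vec_sharp \<nu> x ! m \<le> vec_sharp \<nu> y ! m"
    using nth_vec_sharp[OF assms(1) m] nth_vec_sharp[OF assms(2) m] by simp
qed

definition graft :: "int list \<Rightarrow> int list \<Rightarrow> int list" where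
  "graft x z = take (f0 + 1) x @ map (\<lambda>v. v + 1) z"

lemma length_graft:
  "length x = length \<nu> + 1 \<Longrightarrow> length z = length \<mu> + 1 \<Longrightarrow> length (graft x z) = length \<nu> + 1"
  using f0_less_length by (simp add: graft_def)

lemma nth_graft_prefix: "length x = length \<nu> + 1 \<Longrightarrow> i \<le> f0 \<Longrightarrow> graft x z ! i = x ! i"
  using f0_less_length by (simp add: graft_def nth_append)

lemma nth_graft_suffix:
  "length x = length \<nu> + 1 \<Longrightarrow> m < length z \<Longrightarrow> graft x z ! (f0 + 1 + m) = z ! m + 1"
  using f0_less_length by (simp add: graft_def nth_append)

lemma vec_sharp_graft [simp]: "length x = length \<nu> + 1 \<Longrightarrow> vec_sharp \<nu> (graft x z) = z"
  using f0_less_length by (simp add: graft_def vec_sharp_def comp_def)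

lemma graft_vec_sharp:
  assumes "length w = length \<nu> + 1" "length x = length \<nu> + 1" "\<And>i. i \<le> f0 \<Longrightarrow> w ! i = x ! i"
  shows "graft x (vec_sharp \<nu> w) = w"
proof (rule nth_equalityI)
  show "length (graft x (vec_sharp \<nu> w)) = length w"
    using length_graft length_vec_sharp assms by simp
  fix i assume "i < length (graft x (vec_sharp \<nu> w))"
  then have "i \<le> length \<nu>"
    using length_graft length_vec_sharp assms by simp
  then show "graft x (vec_sharp \<nu> w) ! i = w ! i"
    by (cases rule: index_cases)
      (use assms nth_graft_prefix nth_graft_suffix length_vec_sharp nth_vec_sharp in simp_all)
qed

lemma graft_mono:
  assumes "length x = length \<nu> + 1" "length z = length \<mu> + 1" "vle x x'" "vle z z'"
  shows "vle (graft x z) (graft x' z')"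
  unfolding vle_def
proof (intro conjI allI impI)
  have x': "length x' = length \<nu> + 1" and z': "length z' = length \<mu> + 1"
    using assms unfolding vle_def by simp_all
  show "length (graft x z) = length (graft x' z')"
    using length_graft assms x' z' by simp
  fix i assume "i < length (graft x z)"
  then have "i \<le> length \<nu>"
    using length_graft assms by simp
  then show "graft x z ! i \<le> graft x' z' ! i"
  proof (cases rule: index_cases)
    case 1
    then show ?thesis
      using assms(1,3) x' nth_graft_prefix f0_less_length unfolding vle_def by simp
  next
    case (2 m)
    then show ?thesis
      using assms(2,4) z' nth_graft_suffix[OF assms(1), of m z] nth_graft_suffix[OF x', of m z']
      unfolding vle_def by simp
  qed
qed

lemma graft_le:
  assumes "length x = length \<nu> + 1" "length z = length \<mu> + 1" "vle z (vec_sharp \<nu> x)"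
  shows "vle (graft x z) x"
  using graft_mono[OF assms(1,2) vle_refl assms(3)] graft_vec_sharp[OF assms(1,1)] by simp

lemma graft_in_Vec:
  assumes x: "x \<in> Vec \<nu>" and z: "z \<in> Vec \<mu>" and z_le: "vle z (vec_sharp \<nu> x)"
  shows "graft x z \<in> Vec \<nu>"
proof -
  note len = length_Vec[OF x] and zlen = length_Vec[OF z]
  have suffix: "graft x z ! (f0 + 1 + m) = z ! m + 1" if "m \<le> length \<mu>" for m
    using nth_graft_suffix[OF len] zlen that by simp
  have z_below: "z ! m + 1 \<le> x ! (f0 + 1 + m)" if "m \<le> length \<mu>" for m
  proof -
    have "z ! m \<le> vec_sharp \<nu> x ! m"
      using z_le zlen that unfolding vle_def by auto
    then show ?thesis
      using nth_vec_sharp[OF len that] by simp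
  qed
  show ?thesis
  proof (rule VecI)
    show "length (graft x z) = length \<nu> + 1"
      by (rule length_graft[OF len zlen])
  next
    fix k assume k: "k \<le> nsteps \<nu>"
    show "graft x z ! fidx \<nu> k = int k"
    proof (cases k)
      case 0
      then show ?thesis
        using nth_graft_prefix[OF len, of f0] Vec_nth_fidx[OF x, of 0] by simp
    next
      case (Suc k')
      then have k': "k' \<le> nsteps \<mu>"
        using k nsteps_sharp by simp
      then show ?thesis
        using Suc fidx_Suc[OF k'] suffix[OF fidx_le_length[OF k']] Vec_nth_fidx[OF z k'] by simp
    qed
  next
    fix i assume "i \<le> length \<nu>"
    then have "int (height \<nu> i) \<le> graft x z ! i \<and> graft x z ! i \<le> int (nsteps \<nu>)"
    proof (cases rule: index_cases)
      case 1
      then show ?thesis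
        using nth_graft_prefix[OF len] Vec_nth_ge_height[OF x] Vec_nth_le_nsteps[OF x] f0_less_length
        by simp
    next
      case (2 m)
      have "z ! m \<le> int (nsteps \<nu>) - 1"
        using Vec_nth_le_nsteps[OF z 2(2)] nsteps_sharp has_north_step by simp
      then show ?thesis
        using suffix[OF 2(2)] Vec_nth_ge_height[OF z 2(2)] height_after_f0[of m] 2(1) by simp
    qed
    then show "int (height \<nu> i) \<le> graft x z ! i" "graft x z ! i \<le> int (nsteps \<nu>)"
      by auto
  next
    fix i k j assume i: "i \<le> length \<nu>" and k: "k \<le> nsteps \<nu>" and gi: "graft x z ! i = int k"
      and j: "i + 1 \<le> j" "j \<le> fidx \<nu> k"
    have "j \<le> length \<nu>"
      using j fidx_le_length[OF k] by simp
    from i show "graft x z ! j \<le> int k"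
    proof (cases rule: index_cases)
      case 1
      then have "x ! j \<le> int k"
        using Vec_nth_le_until_fidx[OF x i k _ j] gi nth_graft_prefix[OF len] by simp
      from \<open>j \<le> length \<nu>\<close> show ?thesis
      proof (cases rule: index_cases)
        case 1
        then show ?thesis
          using \<open>x ! j \<le> int k\<close> nth_graft_prefix[OF len] by simp
      next
        case (2 m)
        then show ?thesis
          using \<open>x ! j \<le> int k\<close> suffix[OF 2(2)] z_below[OF 2(2)] by simp
      qed
    next
      case (2 m)
      with gi suffix have zm: "z ! m + 1 = int k"
        by simp
      moreover have "0 \<le> z ! m"
        using Vec_nth_ge_height[OF z \<open>m \<le> length \<mu>\<close>] by simp
      ultimately obtain k' where k': "k = Suc k'"
        by (cases k) auto
      then have k'_le: "k' \<le> nsteps \<mu>"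
        using k nsteps_sharp by simp
      define m' where "m' = j - (f0 + 1)"
      have m': "j = f0 + 1 + m'" "m + 1 \<le> m'"
        using j 2 unfolding m'_def by simp_all
      then have "m' \<le> fidx \<mu> k'"
        using j fidx_Suc[OF k'_le] k' by simp
      then have "z ! m' \<le> int k'"
        using Vec_nth_le_until_fidx[OF z \<open>m \<le> length \<mu>\<close> k'_le _ \<open>m + 1 \<le> m'\<close>] zm k' by simp
      moreover have "m' \<le> length \<mu>"
        using m' \<open>j \<le> length \<nu>\<close> f0_less_length by simp
      ultimately show ?thesis
        using suffix m' k' by simp
    qed
  qed
qed

lemma covby_graft:
  assumes x: "x \<in> Vec \<nu>" and cov: "covby (Vec \<mu>) z (vec_sharp \<nu> x)"
  shows "covby (Vec \<nu>) (graft x z) x"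
proof -
  note xlen = length_Vec[OF x]
  have z: "z \<in> Vec \<mu>" and z_less: "vlt z (vec_sharp \<nu> x)"
    and no_between: "\<not> (\<exists>v\<in>Vec \<mu>. vlt z v \<and> vlt v (vec_sharp \<nu> x))"
    using cov unfolding covby_def by auto
  note zlen = length_Vec[OF z]
  have z_le: "vle z (vec_sharp \<nu> x)"
    using z_less unfolding vlt_def by simp
  have g_less: "vlt (graft x z) x"
    using graft_le[OF xlen zlen z_le] vec_sharp_graft[OF xlen, of z] z_less unfolding vlt_def by auto
  have "\<not> (vlt (graft x z) w \<and> vlt w x)" if w: "w \<in> Vec \<nu>" for w
  proof
    assume "vlt (graft x z) w \<and> vlt w x"
    then have w1: "vlt (graft x z) w" and w2: "vlt w x"
      by simp_all
    note wlen = length_Vec[OF w] and glen = length_graft[OF xlen zlen]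
    have "w ! i = x ! i" if "i \<le> f0" for i
    proof -
      have "i < length w"
        using that f0_less_length wlen by simp
      then have "graft x z ! i \<le> w ! i" "w ! i \<le> x ! i"
        using w1 w2 glen wlen xlen unfolding vlt_def vle_def by auto
      then show ?thesis
        using nth_graft_prefix[OF xlen that] by simp
    qed
    then have w_eq: "graft x (vec_sharp \<nu> w) = w"
      by (rule graft_vec_sharp[OF wlen xlen])
    have "vlt z (vec_sharp \<nu> w)"
      using vec_sharp_mono[OF glen wlen] w1 w_eq vec_sharp_graft[OF xlen] unfolding vlt_def by metis
    moreover have "vlt (vec_sharp \<nu> w) (vec_sharp \<nu> x)"
      using vec_sharp_mono[OF wlen xlen] w2 w_eq graft_vec_sharp[OF xlen xlen]
      unfolding vlt_def by metis
    ultimately show False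
      using no_between vec_sharp_in_Vec[OF w] by blast
  qed
  then show ?thesis
    unfolding covby_def using graft_in_Vec[OF x z z_le] x g_less by blast
qed

text \<open>A cover \<open>y\<close> of \<open>x\<close> with \<open>y\<^sup># \<noteq> x\<^sup>#\<close> equals the graft of \<open>y\<^sup>#\<close> onto \<open>x\<close>, because that
  graft lies between \<open>y\<close> and \<open>x\<close> and differs from \<open>x\<close>.\<close>

lemma covby_vec_sharp:
  assumes x: "x \<in> Vec \<nu>" and cov: "covby (Vec \<nu>) y x" and ne: "vec_sharp \<nu> y \<noteq> vec_sharp \<nu> x"
  shows "covby (Vec \<mu>) (vec_sharp \<nu> y) (vec_sharp \<nu> x)"
proof -
  note xlen = length_Vec[OF x]
  have y: "y \<in> Vec \<nu>" and y_less: "vlt y x"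
    and no_between: "\<not> (\<exists>w\<in>Vec \<nu>. vlt y w \<and> vlt w x)"
    using cov unfolding covby_def by auto
  note ylen = length_Vec[OF y]
  have y_le: "vle y x"
    using y_less unfolding vlt_def by simp
  note sy = vec_sharp_in_Vec[OF y] and sylen = length_vec_sharp[OF ylen]
  have sy_le: "vle (vec_sharp \<nu> y) (vec_sharp \<nu> x)"
    using vec_sharp_mono[OF ylen xlen y_le] .
  define w where "w = graft x (vec_sharp \<nu> y)"
  have y_w: "vle y w"
    using graft_mono[OF ylen sylen y_le vle_refl] graft_vec_sharp[OF ylen ylen] unfolding w_def
    by simp
  have w_x: "vle w x"
    using graft_le[OF xlen sylen sy_le] unfolding w_def .
  have "w \<noteq> x"
    using ne vec_sharp_graft[OF xlen] unfolding w_def by metis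
  have w_y: "w = y"
  proof (rule ccontr)
    assume "w \<noteq> y"
    then have "vlt y w" "vlt w x"
      using y_w w_x \<open>w \<noteq> x\<close> unfolding vlt_def by auto
    then show False
      using no_between graft_in_Vec[OF x sy sy_le] unfolding w_def by blast
  qed
  have "\<not> (vlt (vec_sharp \<nu> y) v \<and> vlt v (vec_sharp \<nu> x))" if v: "v \<in> Vec \<mu>" for v
  proof
    assume "vlt (vec_sharp \<nu> y) v \<and> vlt v (vec_sharp \<nu> x)"
    then have v1: "vlt (vec_sharp \<nu> y) v" and v2: "vlt v (vec_sharp \<nu> x)"
      by simp_all
    have v_le: "vle v (vec_sharp \<nu> x)"
      using v2 unfolding vlt_def by simp
    have "vle y (graft x v)"
      using graft_mono[OF xlen sylen vle_refl] v1 w_y unfolding w_def vlt_def by metis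
    moreover have "vle (graft x v) x"
      using graft_le[OF xlen length_Vec[OF v] v_le] .
    moreover have "y \<noteq> graft x v" "graft x v \<noteq> x"
      using v1 v2 vec_sharp_graft[OF xlen] unfolding vlt_def by metis+
    ultimately show False
      using no_between graft_in_Vec[OF x v v_le] unfolding vlt_def by blast
  qed
  then show ?thesis
    unfolding covby_def vlt_def using sy vec_sharp_in_Vec[OF x] sy_le ne by blast
qed

lemma vec_sharp_covers_image:
  assumes x: "x \<in> Vec \<nu>"
  shows "vec_sharp \<nu> ` ({y. covby (Vec \<nu>) y x} \<union> {x})
           = {z. covby (Vec \<mu>) z (vec_sharp \<nu> x)} \<union> {vec_sharp \<nu> x}"
proof (intro equalityI subsetI)
  fix z assume "z \<in> {z. covby (Vec \<mu>) z (vec_sharp \<nu> x)} \<union> {vec_sharp \<nu> x}"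
  then consider "covby (Vec \<mu>) z (vec_sharp \<nu> x)" | "z = vec_sharp \<nu> x"
    by blast
  then show "z \<in> vec_sharp \<nu> ` ({y. covby (Vec \<nu>) y x} \<union> {x})"
  proof cases
    case 1
    then have "covby (Vec \<nu>) (graft x z) x" "vec_sharp \<nu> (graft x z) = z"
      using covby_graft[OF x] length_Vec[OF x] by auto
    then show ?thesis
      by (metis (mono_tags) UnI1 image_eqI mem_Collect_eq)
  qed simp
qed (use covby_vec_sharp[OF x] in blast)

lemma vec_sharp_vmin:
  assumes "A \<subseteq> Vec \<nu>" "A \<noteq> {}"
  shows "vec_sharp \<nu> (vmin (length \<nu> + 1) A) = vmin (length \<mu> + 1) (vec_sharp \<nu> ` A)"
proof (rule nth_equalityI)
  have fin: "finite A"
    using finite_subset[OF assms(1) finite_Vec] .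
  have len: "length (vmin (length \<nu> + 1) A) = length \<nu> + 1"
    by simp
  show "length (vec_sharp \<nu> (vmin (length \<nu> + 1) A)) = length (vmin (length \<mu> + 1) (vec_sharp \<nu> ` A))"
    using length_vec_sharp[OF len] by simp
  fix m assume "m < length (vec_sharp \<nu> (vmin (length \<nu> + 1) A))"
  then have m: "m \<le> length \<mu>"
    using length_vec_sharp[OF len] by simp
  then have "vec_sharp \<nu> (vmin (length \<nu> + 1) A) ! m = Min ((\<lambda>a. a ! (f0 + 1 + m)) ` A) - 1"
    using nth_vec_sharp[OF len m] nth_vmin[of "f0 + 1 + m" "length \<nu> + 1" A] f0_less_length by simp
  also have "\<dots> = Min ((\<lambda>v. v - 1) ` (\<lambda>a. a ! (f0 + 1 + m)) ` A)"
    by (rule mono_Min_commute) (use fin assms(2) in \<open>auto simp: mono_def\<close>)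
  also have "(\<lambda>v. v - 1) ` (\<lambda>a. a ! (f0 + 1 + m)) ` A = (\<lambda>b. b ! m) ` vec_sharp \<nu> ` A"
    unfolding image_image
  proof (rule image_cong)
    show "a ! (f0 + 1 + m) - 1 = vec_sharp \<nu> a ! m" if "a \<in> A" for a
      using nth_vec_sharp[OF length_Vec[OF subsetD[OF assms(1) that]] m] by simp
  qed simp
  also have "Min \<dots> = vmin (length \<mu> + 1) (vec_sharp \<nu> ` A) ! m"
    using nth_vmin[of m "length \<mu> + 1"] m by simp
  finally show "vec_sharp \<nu> (vmin (length \<nu> + 1) A) ! m = vmin (length \<mu> + 1) (vec_sharp \<nu> ` A) ! m" .
qed

lemma vec_sharp_Pop:
  assumes x: "x \<in> Vec \<nu>"
  shows "vec_sharp \<nu> (Pop (Vec \<nu>) x) = Pop (Vec \<mu>) (vec_sharp \<nu> x)"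
proof -
  define A where "A = {y. covby (Vec \<nu>) y x} \<union> {x}"
  define B where "B = {z. covby (Vec \<mu>) z (vec_sharp \<nu> x)} \<union> {vec_sharp \<nu> x}"
  have A: "A \<subseteq> Vec \<nu>" "A \<noteq> {}"
    using x unfolding A_def covby_def by auto
  have AB: "vec_sharp \<nu> ` A = B"
    unfolding A_def B_def by (rule vec_sharp_covers_image[OF x])
  have B: "B \<subseteq> Vec \<mu>" "B \<noteq> {}"
    using A vec_sharp_in_Vec unfolding AB[symmetric] by auto
  have "vec_sharp \<nu> (Pop (Vec \<nu>) x) = vec_sharp \<nu> (vmin (length \<nu> + 1) A)"
    unfolding Pop_def A_def[symmetric] meet_Vec[OF A] ..
  also have "\<dots> = vmin (length \<mu> + 1) B"
    using vec_sharp_vmin[OF A] AB by simp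
  also have "\<dots> = Pop (Vec \<mu>) (vec_sharp \<nu> x)"
    unfolding Pop_def B_def[symmetric] meet_Vec[OF B] ..
  finally show ?thesis .
qed

lemma vec_sharp_funpow_Pop:
  "x \<in> Vec \<nu> \<Longrightarrow> vec_sharp \<nu> ((Pop (Vec \<nu>) ^^ t) x) = (Pop (Vec \<mu>) ^^ t) (vec_sharp \<nu> x)"
proof (induction t arbitrary: x)
  case (Suc t)
  then show ?case
    using Suc.IH[OF Pop_in_Vec[OF Suc.prems]] vec_sharp_Pop[OF Suc.prems]
    by (simp only: funpow_Suc_right comp_apply)
qed simp

lemma vec_sharp_height_vec: "vec_sharp \<nu> (height_vec \<nu>) = height_vec \<mu>"
proof (rule nth_equalityI)
  show "length (vec_sharp \<nu> (height_vec \<nu>)) = length (height_vec \<mu>)"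
    using length_vec_sharp[of "height_vec \<nu>"] by simp
  fix m assume "m < length (vec_sharp \<nu> (height_vec \<nu>))"
  then have m: "m \<le> length \<mu>"
    using length_vec_sharp[of "height_vec \<nu>"] by simp
  then show "vec_sharp \<nu> (height_vec \<nu>) ! m = height_vec \<mu> ! m"
    using nth_vec_sharp[of "height_vec \<nu>", OF _ m] f0_less_length height_after_f0
    by (simp add: nth_height_vec)
qed

end

theorem corollary3p11:
  fixes \<nu> :: "bool list" and bb :: "int list" and t :: nat
  assumes "nsteps \<nu> \<ge> 1"
    and "bb \<in> Vec \<nu>"
    and "pop_sortable (Vec \<nu>) t bb"
  shows "pop_sortable (Vec (path_sharp \<nu>)) t (vec_sharp \<nu> bb)"
proof -
  interpret nonflat_path \<nu>
    using assms(1) by unfold_locales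
  have "(Pop (Vec \<mu>) ^^ t) (vec_sharp \<nu> bb) = vec_sharp \<nu> ((Pop (Vec \<nu>) ^^ t) bb)"
    using vec_sharp_funpow_Pop[OF assms(2)] by simp
  also have "\<dots> = vec_sharp \<nu> (height_vec \<nu>)"
    using assms(3) unfolding pop_sortable_def bottom_Vec by simp
  also have "\<dots> = height_vec \<mu>"
    by (rule vec_sharp_height_vec)
  finally show ?thesis
    unfolding pop_sortable_def path_sharp_def bottom_Vec .
qed

end
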